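(* Let $n\geq 2$, $1<p<\infty$, $\epsilon>0$, let $U\subset\mathbb{R}^n$ be a smooth bounded domain and let $u^\epsilon\in C^\infty(U)\cap C^0(\overline U)$ solve $\operatorname{div}\big((|Du^\epsilon|^2+\epsilon)^{\frac{p-2}{2}}Du^\epsilon\big)=0$ in $U$. Let $\mu=(|Du^\epsilon|^2+\epsilon)^{1/2}$. Then $$|D^2u^\epsilon|^2\geq 2|D|Du^\epsilon||^2+\Phi\,(\Delta^N_\infty u^\epsilon)^2$$ almost everywhere in $U$, where $$\Phi=\frac{(p-1)^2}{n-1}-1-\frac{\epsilon}{\mu^2}\cdot\frac{2(p-1)(p-2)}{n-1}+\frac{\epsilon^2}{\mu^4}\cdot\frac{(p-2)^2}{n-1}.$$ If $n=2$, equality holds almost everywhere.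
   Context: $|Du^\epsilon|$ is locally Lipschitz, hence differentiable a.e.; at such points where $Du^\epsilon=0$ one has $D|Du^\epsilon|=0$. The normalized infinity Laplacian is defined a.e. by $\Delta^N_\infty u^\epsilon=\langle \frac{Du^\epsilon}{|Du^\epsilon|},D|Du^\epsilon|\rangle$ (interpreted as $0$ where $Du^\epsilon=0$), so that $\Delta^N_\infty u^\epsilon=\langle Du^\epsilon,D^2u^\epsilon Du^\epsilon\rangle/|Du^\epsilon|^2$ where $Du^\epsilon\neq0$. $|D^2u^\epsilon|$ is the Hilbert–Schmidt norm of the Hessian. *)

theory Defs
  imports "HOL-Analysis.Analysis"
begin

definition pderiv_i :: "'n::finite \<Rightarrow> (real^'n \<Rightarrow> real) \<Rightarrow> real^'n \<Rightarrow> real" where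
  "pderiv_i i f x = frechet_derivative f (at x) (axis i 1)"

definition grad :: "(real^'n::finite \<Rightarrow> real) \<Rightarrow> real^'n \<Rightarrow> real^'n" where
  "grad f x = (\<chi> i. pderiv_i i f x)"

definition hess :: "(real^'n::finite \<Rightarrow> real) \<Rightarrow> real^'n \<Rightarrow> real^'n^'n" where
  "hess f x = (\<chi> i j. pderiv_i j (\<lambda>y. pderiv_i i f y) x)"

definition hs_norm_sq :: "real^'n::finite^'n \<Rightarrow> real" where
  "hs_norm_sq H = (\<Sum>i\<in>UNIV. \<Sum>j\<in>UNIV. (H $ i $ j)^2)"

primrec Ck_on :: "nat \<Rightarrow> (real^'n::finite) set \<Rightarrow> (real^'n \<Rightarrow> real) \<Rightarrow> bool" where
  "Ck_on 0 U f = continuous_on U f"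
| "Ck_on (Suc k) U f = (continuous_on U f \<and> (\<forall>x\<in>U. f differentiable (at x)) \<and>
        (\<forall>i. Ck_on k U (pderiv_i i f)))"

definition smooth_on :: "(real^'n::finite) set \<Rightarrow> (real^'n \<Rightarrow> real) \<Rightarrow> bool" where
  "smooth_on U f = (\<forall>k. Ck_on k U f)"

definition smooth_bounded_domain :: "(real^'n::finite) set \<Rightarrow> bool" where
  "smooth_bounded_domain U \<longleftrightarrow> open U \<and> connected U \<and> bounded U \<and> U \<noteq> {} \<and>
     (\<forall>z\<in>frontier U. \<exists>r>0. \<exists>\<phi>. smooth_on UNIV \<phi> \<and> (\<forall>x\<in>ball z r. grad \<phi> x \<noteq> 0) \<and>
          U \<inter> ball z r = {x\<in>ball z r. \<phi> x < 0})"

text \<open>Normalized infinity Laplacian <Du/|Du|, D|Du|>, interpreted as 0 where Du = 0.\<close>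
definition ninf_lap :: "(real^'n::finite \<Rightarrow> real) \<Rightarrow> real^'n \<Rightarrow> real" where
  "ninf_lap f x = (if grad f x = 0 then 0
     else inner ((1 / norm (grad f x)) *\<^sub>R grad f x) (grad (\<lambda>y. norm (grad f y)) x))"

end

(* Where Du(x) \<noteq> 0 put v = Du/|Du|, H = D\<^sup>2u (symmetric by Schwarz) and a = <v, Hv>.  Then
   D|Du| = Hv and the normalized infinity Laplacian is a, while expanding the divergence in the
   equation gives tr H = -(p - 2) |Du|\<^sup>2 a / (|Du|\<^sup>2 + \<epsilon>).  Compressing H to v\<^sup>\<bottom> gives a
   symmetric M with Mv = 0 and |H|\<^sup>2 = 2 |Hv|\<^sup>2 - a\<^sup>2 + |M|\<^sup>2.  Cauchy-Schwarz against the
   projection onto v\<^sup>\<bottom> gives |M|\<^sup>2 \<ge> (tr H - a)\<^sup>2 / (n - 1), with equality for n = 2, where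
   M has rank at most one; substituting tr H produces the coefficient \<Phi>.  Where Du(x) = 0 both
   sides vanish as soon as D\<^sup>2u(x) = 0, and the points where some \<partial>\<^sub>k u vanishes while one of
   its partial derivatives does not form a null set, being locally a graph over a hyperplane. *)

theory Submission
  imports Defs
begin

lemma pderiv_i_eqI:
  fixes f :: "real^'n::finite \<Rightarrow> real"
  assumes "(f has_derivative f') (at x)"
  shows "pderiv_i i f x = f' (axis i 1)"
  using frechet_derivative_at[OF assms] by (simp add: pderiv_i_def)

lemma grad_eqI:
  fixes f :: "real^'n::finite \<Rightarrow> real"
  assumes "(f has_derivative (\<lambda>h. c \<bullet> h)) (at x)"
  shows "grad f x = c"
  using pderiv_i_eqI[OF assms] by (simp add: grad_def vec_eq_iff inner_axis)

lemma has_derivative_grad: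
  fixes f :: "real^'n::finite \<Rightarrow> real"
  assumes "f differentiable (at x)"
  shows "(f has_derivative (\<lambda>h. grad f x \<bullet> h)) (at x)"
proof -
  let ?f' = "frechet_derivative f (at x)"
  have "?f' h = grad f x \<bullet> h" for h
  proof -
    have "?f' h = ?f' (\<Sum>i\<in>UNIV. h $ i *\<^sub>R axis i 1)"
      by (simp add: basis_expansion flip: scalar_mult_eq_scaleR)
    also have "\<dots> = grad f x \<bullet> h"
      using linear_frechet_derivative[OF assms]
      by (simp add: linear_sum linear_scale grad_def pderiv_i_def inner_vec_def mult.commute)
    finally show ?thesis .
  qed
  then have "?f' = (\<lambda>h. grad f x \<bullet> h)" by (rule ext)
  then show ?thesis
    using frechet_derivative_works[of f "at x"] assms by simp
qed

lemma has_derivative_grad_field: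
  fixes u :: "real^'n::finite \<Rightarrow> real"
  assumes "\<And>i. pderiv_i i u differentiable (at x)"
  shows "(grad u has_derivative (\<lambda>h. hess u x *v h)) (at x)"
proof -
  have "((\<lambda>y. pderiv_i i u y) has_derivative (\<lambda>h. (hess u x *v h) $ i)) (at x)" for i
    using has_derivative_grad[OF assms[of i]]
    by (simp add: matrix_vector_mult_def hess_def grad_def inner_vec_def mult.commute)
  then show ?thesis
    by (subst has_derivative_componentwise_within)
       (auto simp: Basis_vec_def inner_axis grad_def)
qed

lemma pderiv_i_mult:
  fixes f g :: "real^'n::finite \<Rightarrow> real"
  assumes "f differentiable (at x)" "g differentiable (at x)"
  shows "pderiv_i i (\<lambda>y. f y * g y) x = f x * pderiv_i i g x + pderiv_i i f x * g x"
  using pderiv_i_eqI[OF has_derivative_mult[OF has_derivative_grad[OF assms(1)] has_derivative_grad[OF assms(2)]]]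
  by (simp add: grad_def inner_axis)

lemma Ck_on_2_D:
  assumes "Ck_on 2 U u"
  shows "\<And>x. x \<in> U \<Longrightarrow> u differentiable (at x)"
    and "\<And>i x. x \<in> U \<Longrightarrow> pderiv_i i u differentiable (at x)"
    and "\<And>i j. continuous_on U (pderiv_i j (pderiv_i i u))"
  using assms by (simp_all add: numeral_2_eq_2)

section \<open>Symmetry of the Hessian\<close>

lemma has_real_derivative_along_axis:
  fixes f :: "real^'n::finite \<Rightarrow> real"
  assumes "f differentiable (at (y + t *\<^sub>R axis k 1))"
  shows "((\<lambda>s. f (y + s *\<^sub>R axis k 1)) has_real_derivative pderiv_i k f (y + t *\<^sub>R axis k 1)) (at t)"
proof -
  have "((\<lambda>s. y + s *\<^sub>R axis k 1) has_derivative (\<lambda>s. s *\<^sub>R axis k 1)) (at t)"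
    by (auto intro!: derivative_eq_intros)
  from diff_chain_at[OF this has_derivative_grad[OF assms]]
  show ?thesis
    by (simp add: o_def has_field_derivative_def grad_def inner_axis mult_commute_abs)
qed

definition second_difference :: "(real^'n::finite \<Rightarrow> real) \<Rightarrow> 'n \<Rightarrow> 'n \<Rightarrow> real^'n \<Rightarrow> real \<Rightarrow> real" where
  "second_difference f i j x s =
     f (x + s *\<^sub>R axis i 1 + s *\<^sub>R axis j 1) - f (x + s *\<^sub>R axis i 1) - f (x + s *\<^sub>R axis j 1) + f x"

lemma second_difference_commute: "second_difference f i j x s = second_difference f j i x s"
  by (simp add: second_difference_def algebra_simps)

lemma second_difference_mvt:
  fixes f :: "real^'n::finite \<Rightarrow> real"
  assumes "0 < s"
    and diff: "\<And>a b. a \<in> {0..s} \<Longrightarrow> b \<in> {0..s} \<Longrightarrow>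
        f differentiable (at (x + a *\<^sub>R axis i 1 + b *\<^sub>R axis j 1)) \<and>
        pderiv_i i f differentiable (at (x + a *\<^sub>R axis i 1 + b *\<^sub>R axis j 1))"
  obtains a b where "a \<in> {0..s}" "b \<in> {0..s}"
    "second_difference f i j x s = s * s * pderiv_i j (pderiv_i i f) (x + a *\<^sub>R axis i 1 + b *\<^sub>R axis j 1)"
proof -
  define ei where "ei = (axis i 1 :: real^'n)"
  define ej where "ej = (axis j 1 :: real^'n)"
  have shift: "x + s *\<^sub>R ej + t *\<^sub>R ei = x + t *\<^sub>R ei + s *\<^sub>R ej" for t
    by (simp add: algebra_simps)
  define \<phi> where "\<phi> t = f (x + s *\<^sub>R ej + t *\<^sub>R ei) - f (x + t *\<^sub>R ei)" for t
  have "(\<phi> has_real_derivative pderiv_i i f (x + s *\<^sub>R ej + t *\<^sub>R ei) - pderiv_i i f (x + t *\<^sub>R ei)) (at t)"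
    if "0 \<le> t" "t \<le> s" for t
  proof -
    have "f differentiable (at (x + s *\<^sub>R ej + t *\<^sub>R ei))" "f differentiable (at (x + t *\<^sub>R ei))"
      unfolding shift using diff[of t s] diff[of t 0] that \<open>0 < s\<close> by (auto simp: ei_def ej_def)
    then show ?thesis
      unfolding \<phi>_def ei_def by (intro DERIV_diff has_real_derivative_along_axis)
  qed
  from MVT2[OF \<open>0 < s\<close> this] obtain a where a: "0 < a" "a < s" and \<phi>_diff:
      "\<phi> s - \<phi> 0 = (s - 0) * (pderiv_i i f (x + s *\<^sub>R ej + a *\<^sub>R ei) - pderiv_i i f (x + a *\<^sub>R ei))"
    by blast
  have "((\<lambda>t. pderiv_i i f (x + a *\<^sub>R ei + t *\<^sub>R ej)) has_real_derivative
      pderiv_i j (pderiv_i i f) (x + a *\<^sub>R ei + t *\<^sub>R ej)) (at t)" if "0 \<le> t" "t \<le> s" for t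
    using has_real_derivative_along_axis[of "pderiv_i i f" "x + a *\<^sub>R ei" t j] diff[of a t] a that
    unfolding ei_def ej_def by auto
  from MVT2[OF \<open>0 < s\<close> this] obtain b where b: "0 < b" "b < s" and
      "pderiv_i i f (x + a *\<^sub>R ei + s *\<^sub>R ej) - pderiv_i i f (x + a *\<^sub>R ei + 0 *\<^sub>R ej)
         = (s - 0) * pderiv_i j (pderiv_i i f) (x + a *\<^sub>R ei + b *\<^sub>R ej)"
    by blast
  with \<phi>_diff have "\<phi> s - \<phi> 0 = s * s * pderiv_i j (pderiv_i i f) (x + a *\<^sub>R ei + b *\<^sub>R ej)"
    by (simp add: shift)
  moreover have "\<phi> s - \<phi> 0 = second_difference f i j x s"
    unfolding \<phi>_def shift by (simp add: second_difference_def ei_def ej_def)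
  ultimately show thesis
    using that[of a b] a b unfolding ei_def ej_def by simp
qed

lemma second_difference_quotient_tendsto:
  fixes f :: "real^'n::finite \<Rightarrow> real"
  assumes "open U" "x \<in> U"
    and "\<And>y. y \<in> U \<Longrightarrow> f differentiable (at y)"
    and "\<And>y. y \<in> U \<Longrightarrow> pderiv_i i f differentiable (at y)"
    and "continuous_on U (pderiv_i j (pderiv_i i f))"
  shows "((\<lambda>s. second_difference f i j x s / (s * s)) \<longlongrightarrow> pderiv_i j (pderiv_i i f) x) (at_right 0)"
proof (rule tendstoI)
  fix e :: real
  assume "e > 0"
  let ?D = "pderiv_i j (pderiv_i i f)"
  have "continuous (at x) ?D"
    using assms(1,2,5) continuous_on_eq_continuous_at by blast
  then obtain d1 where "d1 > 0" and d1: "\<And>y. dist y x < d1 \<Longrightarrow> dist (?D y) (?D x) < e"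
    using \<open>e > 0\<close> unfolding continuous_at_eps_delta by blast
  obtain d2 where "d2 > 0" "ball x d2 \<subseteq> U"
    using assms(1,2) open_contains_ball by blast
  define d where "d = min d1 d2"
  have near: "dist (x + a *\<^sub>R axis i 1 + b *\<^sub>R axis j 1) x < d"
    if "a \<in> {0..s}" "b \<in> {0..s}" "s < d / 2" for a b s
  proof -
    have "dist (x + a *\<^sub>R axis i 1 + b *\<^sub>R axis j 1) x = norm (a *\<^sub>R axis i 1 + b *\<^sub>R (axis j 1 :: real^'n))"
      by (simp add: dist_norm)
    also have "\<dots> \<le> norm (a *\<^sub>R (axis i 1 :: real^'n)) + norm (b *\<^sub>R (axis j 1 :: real^'n))"
      by (rule norm_triangle_ineq)
    also have "\<dots> < d"
      using that by simp
    finally show ?thesis .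
  qed
  have "dist (second_difference f i j x s / (s * s)) (?D x) < e" if "0 < s" "s < d / 2" for s
  proof -
    have "x + a *\<^sub>R axis i 1 + b *\<^sub>R axis j 1 \<in> U" if "a \<in> {0..s}" "b \<in> {0..s}" for a b
      using near[OF that \<open>s < d / 2\<close>] \<open>ball x d2 \<subseteq> U\<close> by (auto simp: d_def dist_commute)
    then obtain a b where ab: "a \<in> {0..s}" "b \<in> {0..s}" and
      "second_difference f i j x s = s * s * ?D (x + a *\<^sub>R axis i 1 + b *\<^sub>R axis j 1)"
      using second_difference_mvt[OF \<open>0 < s\<close>, of f x i j] assms(3,4) by blast
    then show ?thesis
      using d1 near[OF ab \<open>s < d / 2\<close>] \<open>0 < s\<close> by (simp add: d_def)
  qed
  moreover have "d / 2 > 0"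
    using \<open>d1 > 0\<close> \<open>d2 > 0\<close> by (simp add: d_def)
  ultimately show "\<forall>\<^sub>F s in at_right 0. dist (second_difference f i j x s / (s * s)) (?D x) < e"
    unfolding eventually_at_right_field by blast
qed

lemma pderiv_i_commute:
  fixes f :: "real^'n::finite \<Rightarrow> real"
  assumes "open U" "x \<in> U"
    and "\<And>y. y \<in> U \<Longrightarrow> f differentiable (at y)"
    and "\<And>k y. y \<in> U \<Longrightarrow> pderiv_i k f differentiable (at y)"
    and "\<And>k l. continuous_on U (pderiv_i l (pderiv_i k f))"
  shows "pderiv_i j (pderiv_i i f) x = pderiv_i i (pderiv_i j f) x"
proof -
  have "((\<lambda>s. second_difference f i j x s / (s * s)) \<longlongrightarrow> pderiv_i j (pderiv_i i f) x) (at_right 0)"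
    by (rule second_difference_quotient_tendsto) (use assms in simp_all)
  moreover have "((\<lambda>s. second_difference f i j x s / (s * s)) \<longlongrightarrow> pderiv_i i (pderiv_i j f) x) (at_right 0)"
    unfolding second_difference_commute[of f i j]
    by (rule second_difference_quotient_tendsto) (use assms in simp_all)
  ultimately show ?thesis
    by (rule tendsto_unique[OF trivial_limit_at_right_real])
qed

lemma hess_symmetric:
  assumes "open U" "x \<in> U" "Ck_on 2 U u"
  shows "transpose (hess u x) = hess u x"
  using pderiv_i_commute[OF assms(1,2) Ck_on_2_D[OF assms(3)]]
  by (simp add: transpose_def hess_def vec_eq_iff)

section \<open>The Hilbert--Schmidt norm of a symmetric matrix\<close>

definition outer_prod :: "real^'n::finite \<Rightarrow> real^'m::finite \<Rightarrow> real^'m^'n" where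
  "outer_prod a b = (\<chi> i j. a $ i * b $ j)"

lemma hs_norm_sq_eq_inner: "hs_norm_sq H = H \<bullet> H"
  by (simp add: hs_norm_sq_def inner_vec_def power2_eq_square)

lemma inner_outer_prod: "outer_prod a b \<bullet> outer_prod c d = (a \<bullet> c) * (b \<bullet> d)"
  unfolding outer_prod_def inner_vec_def sum_product by (simp add: mult_ac)

lemma inner_outer_prod_right: "A \<bullet> outer_prod a b = a \<bullet> (A *v b)"
  by (simp add: outer_prod_def inner_vec_def matrix_vector_mult_def sum_distrib_left mult_ac)

lemma inner_outer_prod_left: "outer_prod a b \<bullet> A = a \<bullet> (A *v b)"
  by (simp add: inner_commute inner_outer_prod_right)

lemma inner_mat_1: "A \<bullet> mat 1 = trace A"
  by (simp add: inner_vec_def mat_def trace_def if_distrib cong: if_cong)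

lemma trace_outer_prod: "trace (outer_prod a b) = a \<bullet> b"
  by (simp add: outer_prod_def trace_def inner_vec_def)

lemma outer_prod_mult_vec: "outer_prod a b *v c = (b \<bullet> c) *\<^sub>R a"
  by (simp add: outer_prod_def matrix_vector_mult_def inner_vec_def vec_eq_iff sum_distrib_right mult_ac)
     (simp add: sum_distrib_left)

lemma symmetric_inner_mult_vec:
  fixes A :: "real^'n::finite^'n"
  assumes "transpose A = A"
  shows "a \<bullet> (A *v b) = (A *v a) \<bullet> b"
  using dot_lmul_matrix[of a A b] transpose_matrix_vector[of A a] assms by simp

text \<open>\<open>P\<close> is the orthogonal projection onto \<open>v\<^sup>\<bottom>\<close> and \<open>M = P H P\<close> the compression of \<open>H\<close> to it.\<close>

lemma symmetric_matrix_gram_identities: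
  fixes H :: "real^'n::finite^'n" and v :: "real^'n"
  assumes "transpose H = H" "norm v = 1"
  defines "q \<equiv> H *v v"
  defines "a \<equiv> v \<bullet> q"
  defines "M \<equiv> H - outer_prod v q - outer_prod q v + a *\<^sub>R outer_prod v v"
  defines "P \<equiv> mat 1 - outer_prod v v"
  shows "M \<bullet> M = H \<bullet> H - 2 * (q \<bullet> q) + a^2"
    and "M \<bullet> P = trace H - a"
    and "P \<bullet> P = real CARD('n) - 1"
    and "transpose M = M"
    and "M *v v = 0"
proof -
  have vv: "v \<bullet> v = 1"
    using assms(2) by (simp add: norm_eq_1)
  have Hv: "v \<bullet> (H *v w) = q \<bullet> w" "w \<bullet> (H *v v) = w \<bullet> q" for w
    using symmetric_inner_mult_vec[OF assms(1)] by (simp_all add: q_def)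
  note bilinear = inner_diff_left inner_diff_right inner_add_left inner_add_right
    inner_scaleR_left inner_scaleR_right
  note outer = inner_outer_prod inner_outer_prod_left inner_outer_prod_right
  show "M \<bullet> M = H \<bullet> H - 2 * (q \<bullet> q) + a^2"
    unfolding M_def bilinear unfolding outer Hv
    using vv by (simp add: a_def outer_prod_mult_vec inner_commute power2_eq_square)
  show "M \<bullet> P = trace H - a"
    unfolding M_def P_def bilinear unfolding outer Hv
    using vv by (simp add: a_def outer_prod_mult_vec inner_commute inner_mat_1 trace_outer_prod)
  show "P \<bullet> P = real CARD('n) - 1"
    unfolding P_def bilinear unfolding outer using vv
    by (simp add: outer_prod_mult_vec inner_commute[of "mat 1"] inner_mat_1 trace_I)
  have "H $ j $ i = H $ i $ j" for i j
    using arg_cong[OF assms(1), of "\<lambda>A. A $ i $ j"] by (simp add: transpose_def)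
  then show "transpose M = M"
    by (simp add: M_def transpose_def outer_prod_def vec_eq_iff mult.commute)
  have "M *v v = q - (q \<bullet> v) *\<^sub>R v - (v \<bullet> v) *\<^sub>R q + a *\<^sub>R ((v \<bullet> v) *\<^sub>R v)"
    unfolding M_def matrix_vector_mult_diff_rdistrib matrix_vector_mult_add_rdistrib
      scaleR_matrix_vector_assoc[symmetric] outer_prod_mult_vec q_def ..
  then show "M *v v = 0"
    using vv unfolding a_def by (simp add: inner_commute[of v q])
qed

lemma inner_self_eq_trace_sq_2x2:
  fixes M :: "real^'n::finite^'n" and v :: "real^'n"
  assumes "CARD('n) = 2" "transpose M = M" "M *v v = 0" "v \<noteq> 0"
  shows "M \<bullet> M = (trace M)^2"
proof -
  obtain i j :: 'n where ij: "UNIV = {i, j}" "i \<noteq> j"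
    using assms(1) card_2_iff by metis
  have sum2: "(\<Sum>k\<in>UNIV. f k) = f i + f j" for f :: "'n \<Rightarrow> real"
    unfolding ij(1) using ij(2) by simp
  have sym: "M $ j $ i = M $ i $ j"
    using arg_cong[OF assms(2), of "\<lambda>A. A $ i $ j"] by (simp add: transpose_def)
  have ker: "M $ i $ i * v $ i + M $ i $ j * v $ j = 0" "M $ i $ j * v $ i + M $ j $ j * v $ j = 0"
    using arg_cong[OF assms(3), of "\<lambda>w. w $ i"] arg_cong[OF assms(3), of "\<lambda>w. w $ j"] sym
    by (simp_all add: matrix_vector_mult_def sum2)
  obtain k where "v $ k \<noteq> 0"
    using assms(4) by (auto simp: vec_eq_iff)
  moreover have "k = i \<or> k = j"
    using ij(1) by blast
  ultimately have "(v $ i)^2 + (v $ j)^2 > 0"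
    by (auto intro: add_pos_nonneg add_nonneg_pos)
  \<comment> \<open>A symmetric \<open>2 \<times> 2\<close> matrix with a nonzero kernel vector has vanishing determinant.\<close>
  moreover have "((M $ i $ j)^2 - M $ i $ i * M $ j $ j) * ((v $ i)^2 + (v $ j)^2)
      = (M $ i $ j * v $ j - M $ j $ j * v $ i) * (M $ i $ i * v $ i + M $ i $ j * v $ j)
        + (M $ i $ j * v $ i - M $ i $ i * v $ j) * (M $ i $ j * v $ i + M $ j $ j * v $ j)"
    by (simp add: algebra_simps power2_eq_square)
  ultimately have "(M $ i $ j)^2 = M $ i $ i * M $ j $ j"
    using ker by auto
  then show ?thesis
    using sym by (simp add: inner_vec_def trace_def sum2 power2_eq_square algebra_simps)
qed

lemma hs_norm_sq_symmetric_estimate: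
  fixes H :: "real^'n::finite^'n" and v :: "real^'n"
  assumes "transpose H = H" "norm v = 1" "CARD('n) \<ge> 2"
  defines "R \<equiv> 2 * norm (H *v v)^2 - (v \<bullet> (H *v v))^2 + (trace H - v \<bullet> (H *v v))^2 / (real CARD('n) - 1)"
  shows "hs_norm_sq H \<ge> R"
    and "CARD('n) = 2 \<Longrightarrow> hs_norm_sq H = R"
proof -
  define M where "M = H - outer_prod v (H *v v) - outer_prod (H *v v) v + (v \<bullet> (H *v v)) *\<^sub>R outer_prod v v"
  define P :: "real^'n^'n" where "P = mat 1 - outer_prod v v"
  note gram = symmetric_matrix_gram_identities[OF assms(1,2), folded M_def P_def]
  have hs: "hs_norm_sq H = R - (trace H - v \<bullet> (H *v v))^2 / (real CARD('n) - 1) + M \<bullet> M"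
    using gram(1) by (simp add: R_def hs_norm_sq_eq_inner power2_norm_eq_inner)
  have "(trace H - v \<bullet> (H *v v))^2 \<le> (M \<bullet> M) * (real CARD('n) - 1)"
    using Cauchy_Schwarz_ineq[of M P] gram by simp
  moreover have "real CARD('n) - 1 > 0"
    using assms(3) by simp
  ultimately have "(trace H - v \<bullet> (H *v v))^2 / (real CARD('n) - 1) \<le> M \<bullet> M"
    by (simp add: divide_le_eq)
  then show "hs_norm_sq H \<ge> R"
    using hs by simp
  assume "CARD('n) = 2"
  have "trace M = M \<bullet> P"
    using gram(5) by (simp add: P_def inner_diff_right inner_mat_1 inner_outer_prod_right)
  moreover have "v \<noteq> 0"
    using assms(2) by auto
  ultimately have "M \<bullet> M = (trace H - v \<bullet> (H *v v))^2"
    using inner_self_eq_trace_sq_2x2[OF \<open>CARD('n) = 2\<close> gram(4,5)] gram(2) by simp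
  then show "hs_norm_sq H = R"
    using hs \<open>CARD('n) = 2\<close> by simp
qed

section \<open>The gradient of \<open>|Du|\<close> and the normalized infinity Laplacian\<close>

lemma has_derivative_norm_grad_sq:
  fixes u :: "real^'n::finite \<Rightarrow> real"
  assumes "\<And>i. pderiv_i i u differentiable (at x)"
  shows "((\<lambda>y. norm (grad u y)^2) has_derivative (\<lambda>h. (2 *\<^sub>R (grad u x v* hess u x)) \<bullet> h)) (at x)"
proof -
  have "((\<lambda>y. grad u y \<bullet> grad u y) has_derivative
      (\<lambda>h. grad u x \<bullet> (hess u x *v h) + (hess u x *v h) \<bullet> grad u x)) (at x)"
    using has_derivative_inner[OF has_derivative_grad_field[OF assms] has_derivative_grad_field[OF assms]] .
  then show ?thesis
    by (simp add: power2_norm_eq_inner dot_lmul_matrix inner_commute[of "hess u x *v _"])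
qed

lemma grad_norm_grad:
  fixes u :: "real^'n::finite \<Rightarrow> real"
  assumes "\<And>i. pderiv_i i u differentiable (at x)" "grad u x \<noteq> 0"
  shows "grad (\<lambda>y. norm (grad u y)) x = sgn (grad u x) v* hess u x"
proof (rule grad_eqI)
  have "(\<lambda>h. (hess u x *v h) \<bullet> sgn (grad u x)) = (\<lambda>h. (sgn (grad u x) v* hess u x) \<bullet> h)"
    unfolding dot_lmul_matrix by (simp add: inner_commute[of "sgn (grad u x)"])
  then show "((\<lambda>y. norm (grad u y)) has_derivative (\<lambda>h. (sgn (grad u x) v* hess u x) \<bullet> h)) (at x)"
    using has_derivative_compose[OF has_derivative_grad_field[OF assms(1)] has_derivative_norm[OF assms(2)]]
    by simp
qed

lemma ninf_lap_eq:
  fixes u :: "real^'n::finite \<Rightarrow> real"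
  assumes "\<And>i. pderiv_i i u differentiable (at x)" "grad u x \<noteq> 0"
  shows "ninf_lap u x = sgn (grad u x) \<bullet> (hess u x *v sgn (grad u x))"
proof -
  have "(1 / norm (grad u x)) *\<^sub>R grad u x = sgn (grad u x)"
    by (simp add: sgn_div_norm divide_inverse)
  then show ?thesis
    using assms(2) by (simp add: ninf_lap_def grad_norm_grad[OF assms] inner_commute[of "sgn (grad u x)"]
        dot_lmul_matrix)
qed

lemma has_derivative_norm_vanishing:
  fixes f :: "'a::real_normed_vector \<Rightarrow> 'b::real_normed_vector"
  assumes "(f has_derivative (\<lambda>_. 0)) (at x)" "f x = 0"
  shows "((\<lambda>y. norm (f y)) has_derivative (\<lambda>_. 0)) (at x)"
  using assms by (simp add: has_derivative_iff_norm)

lemma grad_norm_grad_degenerate: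
  fixes u :: "real^'n::finite \<Rightarrow> real"
  assumes "\<And>i. pderiv_i i u differentiable (at x)" "grad u x = 0" "hess u x = 0"
  shows "grad (\<lambda>y. norm (grad u y)) x = 0"
proof (rule grad_eqI)
  show "((\<lambda>y. norm (grad u y)) has_derivative (\<lambda>h. 0 \<bullet> h)) (at x)"
    using has_derivative_norm_vanishing[of "grad u"] has_derivative_grad_field[OF assms(1)] assms(2,3)
    by simp
qed

lemma trace_hess_of_pde:
  fixes u :: "real^'n::finite \<Rightarrow> real" and p \<epsilon> :: real
  assumes "\<And>i. pderiv_i i u differentiable (at x)" "\<epsilon> > 0"
    and "(\<Sum>i\<in>UNIV. pderiv_i i
            (\<lambda>y. (norm (grad u y)^2 + \<epsilon>) powr ((p - 2) / 2) * pderiv_i i u y) x) = 0"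
  shows "trace (hess u x) = - (p - 2) * (grad u x \<bullet> (hess u x *v grad u x)) / (norm (grad u x)^2 + \<epsilon>)"
proof -
  define m where "m = norm (grad u x)^2 + \<epsilon>"
  define W where "W y = (norm (grad u y)^2 + \<epsilon>) powr ((p - 2) / 2)" for y
  have "m > 0"
    using assms(2) by (simp add: m_def add_nonneg_pos)
  have "(W has_derivative (\<lambda>h. W x * (0 * ln m + ((2 *\<^sub>R (grad u x v* hess u x)) \<bullet> h + 0) * ((p - 2) / 2) / m))) (at x)"
    unfolding W_def m_def
    by (rule has_derivative_powr has_derivative_add has_derivative_norm_grad_sq assms(1) has_derivative_const
        | use \<open>m > 0\<close> in \<open>simp add: m_def\<close>)+
  moreover have "(\<lambda>h. W x * (0 * ln m + ((2 *\<^sub>R (grad u x v* hess u x)) \<bullet> h + 0) * ((p - 2) / 2) / m))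
      = (\<lambda>h. (((p - 2) * W x / m) *\<^sub>R (grad u x v* hess u x)) \<bullet> h)"
    using \<open>m > 0\<close> by (simp add: fun_eq_iff field_simps)
  ultimately have dW: "(W has_derivative (\<lambda>h. (((p - 2) * W x / m) *\<^sub>R (grad u x v* hess u x)) \<bullet> h)) (at x)"
    by simp
  have "pderiv_i i (\<lambda>y. W y * pderiv_i i u y) x = W x * hess u x $ i $ i + pderiv_i i W x * grad u x $ i" for i
    using pderiv_i_mult[of W x "pderiv_i i u"] differentiableI[OF dW] assms(1) by (simp add: hess_def grad_def)
  then have "0 = (\<Sum>i\<in>UNIV. W x * hess u x $ i $ i + pderiv_i i W x * grad u x $ i)"
    using assms(3) by (simp add: W_def)
  also have "\<dots> = W x * trace (hess u x) + grad W x \<bullet> grad u x"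
    by (simp add: sum.distrib sum_distrib_left trace_def inner_vec_def grad_def[of W])
  also have "\<dots> = W x * (trace (hess u x) + (p - 2) / m * (grad u x \<bullet> (hess u x *v grad u x)))"
    by (simp add: grad_eqI[OF dW] dot_lmul_matrix algebra_simps)
  finally have "trace (hess u x) + (p - 2) / m * (grad u x \<bullet> (hess u x *v grad u x)) = 0"
    using \<open>m > 0\<close> by (simp add: W_def m_def[symmetric])
  then show ?thesis
    unfolding m_def[symmetric] using \<open>m > 0\<close> by (simp add: field_simps)
qed

definition phi_coeff :: "real \<Rightarrow> real \<Rightarrow> real \<Rightarrow> real \<Rightarrow> real" where
  "phi_coeff n p \<epsilon> \<mu> = (p - 1)^2 / (n - 1) - 1 - \<epsilon> / \<mu>^2 * (2 * (p - 1) * (p - 2) / (n - 1))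
     + \<epsilon>^2 / \<mu>^4 * ((p - 2)^2 / (n - 1))"

lemma phi_coeff_identity:
  fixes N \<epsilon> n p a :: real
  assumes "N \<ge> 0" "\<epsilon> > 0"
  shows "(- (p - 2) * N * a / (N + \<epsilon>) - a)^2 / (n - 1) - a^2 = phi_coeff n p \<epsilon> (sqrt (N + \<epsilon>)) * a^2"
proof -
  define m where "m = N + \<epsilon>"
  define e where "e = \<epsilon> / m"
  define k where "k = 1 / (n - 1)"
  have "m > 0"
    using assms by (simp add: m_def)
  have sqrt_m2: "(sqrt m)^2 = m"
    using \<open>m > 0\<close> by simp
  have sqrt_m4: "(sqrt m)^4 = m^2"
    using power_mult[of "sqrt m" 2 2] by (simp add: sqrt_m2)
  have lhs: "- (p - 2) * N * a / m - a = - a * ((p - 1) - (p - 2) * e)"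
    using \<open>m > 0\<close> by (simp add: m_def e_def field_simps)
  have e2: "\<epsilon>^2 / m^2 = e^2"
    by (simp add: e_def power_divide)
  have div_k: "z / (n - 1) = z * k" for z
    by (simp add: k_def)
  show ?thesis
    unfolding phi_coeff_def m_def[symmetric] sqrt_m2 sqrt_m4 e_def[symmetric] lhs e2 div_k
    by (simp add: power2_eq_square algebra_simps)
qed

lemma hessian_estimate_noncritical:
  fixes u :: "real^'n::finite \<Rightarrow> real" and p \<epsilon> :: real
  assumes "open U" "x \<in> U" "Ck_on 2 U u" "\<epsilon> > 0" "CARD('n) \<ge> 2"
    and pde: "(\<Sum>i\<in>UNIV. pderiv_i i
            (\<lambda>y. (norm (grad u y)^2 + \<epsilon>) powr ((p - 2) / 2) * pderiv_i i u y) x) = 0"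
    and "grad u x \<noteq> 0"
  defines "R \<equiv> 2 * norm (grad (\<lambda>y. norm (grad u y)) x)^2
      + phi_coeff (real CARD('n)) p \<epsilon> (sqrt (norm (grad u x)^2 + \<epsilon>)) * (ninf_lap u x)^2"
  shows "hs_norm_sq (hess u x) \<ge> R"
    and "CARD('n) = 2 \<Longrightarrow> hs_norm_sq (hess u x) = R"
proof -
  have dg: "\<And>i. pderiv_i i u differentiable (at x)"
    using Ck_on_2_D(2)[OF assms(3,2)] .
  define g where "g = grad u x"
  define H where "H = hess u x"
  define v where "v = sgn g"
  define a where "a = v \<bullet> (H *v v)"
  have sym: "transpose H = H"
    unfolding H_def by (rule hess_symmetric[OF assms(1-3)])
  have "norm v = 1"
    using assms(7) by (simp add: v_def g_def norm_sgn)
  have "grad (\<lambda>y. norm (grad u y)) x = H *v v"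
    using grad_norm_grad[OF dg assms(7)] sym
    by (metis H_def g_def transpose_matrix_vector v_def)
  moreover have "ninf_lap u x = a"
    using ninf_lap_eq[OF dg assms(7)] by (simp add: a_def v_def g_def H_def)
  moreover have "trace H = - (p - 2) * (norm g)^2 * a / ((norm g)^2 + \<epsilon>)"
  proof -
    have "g = norm g *\<^sub>R v"
      using assms(7) by (simp add: v_def g_def sgn_div_norm)
    then have "g \<bullet> (H *v g) = (norm g)^2 * a"
      by (metis a_def inner_scaleR_left inner_scaleR_right matrix_vector_mult_scaleR mult.assoc power2_eq_square)
    then show ?thesis
      using trace_hess_of_pde[OF dg assms(4) pde] by (simp add: g_def H_def)
  qed
  ultimately have "R = 2 * norm (H *v v)^2 - a^2 + (trace H - a)^2 / (real CARD('n) - 1)"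
    using phi_coeff_identity[of "(norm g)^2" \<epsilon> p a "real CARD('n)"] assms(4)
    by (simp add: R_def g_def)
  then show "hs_norm_sq (hess u x) \<ge> R"
    and "CARD('n) = 2 \<Longrightarrow> hs_norm_sq (hess u x) = R"
    using hs_norm_sq_symmetric_estimate[OF sym \<open>norm v = 1\<close> assms(5)] by (simp_all add: H_def a_def)
qed

lemma hessian_estimate:
  fixes u :: "real^'n::finite \<Rightarrow> real" and p \<epsilon> :: real
  assumes "open U" "x \<in> U" "Ck_on 2 U u" "\<epsilon> > 0" "CARD('n) \<ge> 2"
    and pde: "(\<Sum>i\<in>UNIV. pderiv_i i
            (\<lambda>y. (norm (grad u y)^2 + \<epsilon>) powr ((p - 2) / 2) * pderiv_i i u y) x) = 0"
    and "grad u x = 0 \<Longrightarrow> hess u x = 0"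
  defines "R \<equiv> 2 * norm (grad (\<lambda>y. norm (grad u y)) x)^2
      + phi_coeff (real CARD('n)) p \<epsilon> (sqrt (norm (grad u x)^2 + \<epsilon>)) * (ninf_lap u x)^2"
  shows "hs_norm_sq (hess u x) \<ge> R"
    and "CARD('n) = 2 \<Longrightarrow> hs_norm_sq (hess u x) = R"
proof -
  have "hs_norm_sq (hess u x) \<ge> R \<and> (CARD('n) = 2 \<longrightarrow> hs_norm_sq (hess u x) = R)"
  proof (cases "grad u x = 0")
    case True
    then show ?thesis
      using grad_norm_grad_degenerate[OF Ck_on_2_D(2)[OF assms(3,2)] True] True assms(7)
      by (simp add: R_def hs_norm_sq_def ninf_lap_def)
  next
    case False
    then show ?thesis
      using hessian_estimate_noncritical[OF assms(1-5) pde] by (simp add: R_def)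
  qed
  then show "hs_norm_sq (hess u x) \<ge> R" and "CARD('n) = 2 \<Longrightarrow> hs_norm_sq (hess u x) = R"
    by simp_all
qed

lemma negligible_zero_set_nonzero_pderiv:
  fixes g :: "real^'n::finite \<Rightarrow> real"
  assumes "\<And>y. y \<in> S \<Longrightarrow> g differentiable (at y)"
  shows "negligible {y \<in> S. g y = 0 \<and> pderiv_i j g y \<noteq> 0}"
proof -
  \<comment> \<open>Replacing the \<open>j\<close>-th coordinate by \<open>g\<close> has injective derivative where \<open>\<partial>\<^sub>j g \<noteq> 0\<close>;
     the set is the preimage of the hyperplane \<open>x\<^sub>j = 0\<close>.\<close>
  define T where "T = {y \<in> S. pderiv_i j g y \<noteq> 0}"
  define e where "e = (axis j 1 :: real^'n)"
  define f where "f y = y + (g y - y $ j) *\<^sub>R e" for y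
  define f' where "f' y h = h + (grad g y \<bullet> h - h $ j) *\<^sub>R e" for y h
  have "(f has_derivative f' y) (at y within T)" if "y \<in> T" for y
  proof -
    have "((\<lambda>y. y $ j) has_derivative (\<lambda>h. h $ j)) (at y)"
      by (rule bounded_linear_imp_has_derivative) (rule bounded_linear_vec_nth)
    then have "(f has_derivative f' y) (at y)"
      unfolding f_def[abs_def] f'_def using that assms
      by (intro derivative_intros has_derivative_grad) (auto simp: T_def)
    then show ?thesis
      by (rule has_derivative_at_withinI)
  qed
  moreover have "inj (f' y)" if "y \<in> T" for y
  proof (rule injI)
    fix h k :: "real^'n"
    assume eq: "f' y h = f' y k"
    have "h $ i = k $ i" if "i \<noteq> j" for i
      using arg_cong[OF eq, of "\<lambda>z. z $ i"] that by (simp add: f'_def e_def axis_def)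
    moreover have "grad g y \<bullet> h = grad g y \<bullet> k"
      using arg_cong[OF eq, of "\<lambda>z. z $ j"] by (simp add: f'_def e_def)
    then have "grad g y \<bullet> (h - k) = 0"
      by (simp add: inner_diff_right)
    moreover have "grad g y \<bullet> (h - k) = pderiv_i j g y * (h $ j - k $ j)" if "\<And>i. i \<noteq> j \<Longrightarrow> h $ i = k $ i"
      using that by (simp add: inner_vec_def grad_def sum.remove[of UNIV j] sum.neutral)
    ultimately have "h $ j = k $ j"
      using \<open>y \<in> T\<close> by (simp add: T_def)
    with \<open>\<And>i. i \<noteq> j \<Longrightarrow> h $ i = k $ i\<close> show "h = k"
      by (metis vec_eq_iff)
  qed
  ultimately have "negligible {y \<in> T. f y \<in> {z. z $ j = 0}}"
    by (intro negligible_differentiable_vimage negligible_standard_hyperplane_cart)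
  moreover have "{y \<in> T. f y \<in> {z. z $ j = 0}} = {y \<in> S. g y = 0 \<and> pderiv_i j g y \<noteq> 0}"
    by (auto simp: T_def f_def e_def)
  ultimately show ?thesis
    by simp
qed

lemma negligible_degenerate_critical_points:
  assumes "Ck_on 2 U u"
  shows "negligible {x \<in> U. grad u x = 0 \<and> hess u x \<noteq> 0}"
proof (rule negligible_subset)
  show "negligible (\<Union>k j. {y \<in> U. pderiv_i k u y = 0 \<and> pderiv_i j (pderiv_i k u) y \<noteq> 0})"
    by (auto intro!: negligible_Union negligible_zero_set_nonzero_pderiv Ck_on_2_D(2)[OF assms])
  show "{x \<in> U. grad u x = 0 \<and> hess u x \<noteq> 0}
      \<subseteq> (\<Union>k j. {y \<in> U. pderiv_i k u y = 0 \<and> pderiv_i j (pderiv_i k u) y \<noteq> 0})"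
    by (auto simp: hess_def grad_def vec_eq_iff)
qed

theorem lemma3p5:
  fixes U :: "(real^'n::finite) set" and u :: "real^'n \<Rightarrow> real" and p \<epsilon> :: real
  assumes "CARD('n) \<ge> 2"
    and "1 < p"
    and "\<epsilon> > 0"
    and "smooth_bounded_domain U"
    and "smooth_on U u"
    and "continuous_on (closure U) u"
    and "\<forall>x\<in>U. (\<Sum>i\<in>UNIV. pderiv_i i
            (\<lambda>y. (norm (grad u y)^2 + \<epsilon>) powr ((p - 2) / 2) * pderiv_i i u y) x) = 0"
  shows "(AE x in lebesgue. x \<in> U \<longrightarrow>
           (let n = real CARD('n); \<mu> = sqrt (norm (grad u x)^2 + \<epsilon>);
                \<Phi> = (p - 1)^2 / (n - 1) - 1 - \<epsilon> / \<mu>^2 * (2 * (p - 1) * (p - 2) / (n - 1))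
                    + \<epsilon>^2 / \<mu>^4 * ((p - 2)^2 / (n - 1))
            in hs_norm_sq (hess u x) \<ge> 2 * norm (grad (\<lambda>y. norm (grad u y)) x)^2
                 + \<Phi> * (ninf_lap u x)^2))
       \<and> (CARD('n) = 2 \<longrightarrow>
          (AE x in lebesgue. x \<in> U \<longrightarrow>
           (let n = real CARD('n); \<mu> = sqrt (norm (grad u x)^2 + \<epsilon>);
                \<Phi> = (p - 1)^2 / (n - 1) - 1 - \<epsilon> / \<mu>^2 * (2 * (p - 1) * (p - 2) / (n - 1))
                    + \<epsilon>^2 / \<mu>^4 * ((p - 2)^2 / (n - 1))
            in hs_norm_sq (hess u x) = 2 * norm (grad (\<lambda>y. norm (grad u y)) x)^2
                 + \<Phi> * (ninf_lap u x)^2)))"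
proof -
  have "open U"
    using assms(4) by (simp add: smooth_bounded_domain_def)
  have C2: "Ck_on 2 U u"
    using assms(5) by (simp add: smooth_on_def)
  define N where "N = {x \<in> U. grad u x = 0 \<and> hess u x \<noteq> 0}"
  have N: "N \<in> null_sets lebesgue"
    using negligible_degenerate_critical_points[OF C2] by (simp add: N_def negligible_iff_null_sets)
  define R where "R x = 2 * norm (grad (\<lambda>y. norm (grad u y)) x)^2
      + phi_coeff (real CARD('n)) p \<epsilon> (sqrt (norm (grad u x)^2 + \<epsilon>)) * (ninf_lap u x)^2" for x
  have "R x \<le> hs_norm_sq (hess u x) \<and> (CARD('n) = 2 \<longrightarrow> hs_norm_sq (hess u x) = R x)"
    if "x \<in> U" "x \<notin> N" for x
    using hessian_estimate[OF \<open>open U\<close> \<open>x \<in> U\<close> C2 assms(3,1)] assms(7) that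
    by (auto simp: R_def N_def)
  then show ?thesis
    unfolding Let_def phi_coeff_def[symmetric] R_def[symmetric]
    by (blast intro: AE_I'[OF N])
qed

end
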